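(* For integers $n\ge1$ and $q\ge2$, $$\mathbb E_{{\boldsymbol y}\in\Sigma_q^{n-1}}\big[\mathsf{H}^{\mathsf{In}}_{1\text{-}\mathsf{Del}}({\boldsymbol y})\big]=\log_2(nq)-\frac{\sum_{r=1}^{n-1}N_{n-1,r,q}\,(r+1)\log_2(r+1)}{nq^n},$$ $$\mathbb E_{{\boldsymbol y}\in\Sigma_q^{n+1}}\big[\mathsf{H}^{\mathsf{In}}_{1\text{-}\mathsf{Ins}}({\boldsymbol y})\big]=\log_2(n+1)-\frac{\sum_{r=1}^{n+1}N_{n+1,r,q}\,r\log_2 r}{(n+1)q^{n+1}},$$ where the expectations are over ${\boldsymbol y}$ uniformly distributed on the indicated sets.
   Context: $\Sigma_q=\{0,\dots,q-1\}$. For sequences ${\boldsymbol u}$ of length $\ell$ and ${\boldsymbol v}$ of length $N\ge\ell$, $\omega_{{\boldsymbol u}}({\boldsymbol v})$ is the number of index tuples $1\le i_1<\dots<i_\ell\le N$ with $v_{i_j}=u_j$. The $1$-deletion channel with input length $n$ maps ${\boldsymbol x}\in\Sigma_q^n$ to ${\boldsymbol y}\in\Sigma_q^{n-1}$ with probability $\omega_{{\boldsymbol y}}({\boldsymbol x})/n$; the $1$-insertion channel with input length $n$ maps ${\boldsymbol x}\in\Sigma_q^n$ to ${\boldsymbol y}\in\Sigma_q^{n+1}$ with probability $\omega_{{\boldsymbol x}}({\boldsymbol y})/((n+1)q)$. Under uniform transmission ($X$ uniform on $\Sigma_q^n$), the input entropy of an output ${\boldsymbol y}$ is $H(X\mid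 Y={\boldsymbol y})$ in bits, with posterior $P({\boldsymbol x}\mid {\boldsymbol y})=\Pr\{{\boldsymbol y}\mid{\boldsymbol x}\}/\sum_{{\boldsymbol x}'}\Pr\{{\boldsymbol y}\mid{\boldsymbol x}'\}$; these are denoted $\mathsf{H}^{\mathsf{In}}_{1\text{-}\mathsf{Del}}({\boldsymbol y})$ and $\mathsf{H}^{\mathsf{In}}_{1\text{-}\mathsf{Ins}}({\boldsymbol y})$ respectively. A run is a maximal block of identical consecutive symbols, and $N_{\ell,r,q}$ denotes the total number of runs of length exactly $r$ counted over all sequences in $\Sigma_q^{\ell}$. *)

theory Defs
  imports Complex_Main
begin

definition words :: "nat \<Rightarrow> nat \<Rightarrow> nat list set" where
  "words q n = {xs. length xs = n \<and> set xs \<subseteq> {..<q}}"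

text \<open>omega u v: number of index tuples i_1<...<i_l (0-based: sets of l indices of v)
  with v at those indices equal to u.\<close>
definition omega :: "nat list \<Rightarrow> nat list \<Rightarrow> nat" where
  "omega u v = card {I. I \<subseteq> {..<length v} \<and> card I = length u \<and> nths v I = u}"

definition del_prob :: "nat \<Rightarrow> nat list \<Rightarrow> nat list \<Rightarrow> real" where
  "del_prob n x y = real (omega y x) / real n"

definition ins_prob :: "nat \<Rightarrow> nat \<Rightarrow> nat list \<Rightarrow> nat list \<Rightarrow> real" where
  "ins_prob n q x y = real (omega x y) / (real (n + 1) * real q)"

text \<open>Input entropy H(X | Y = y) in bits, X uniform on words q n, channel ch x y = Pr{y|x}.\<close>
definition input_entropy :: "(nat list \<Rightarrow> nat list \<Rightarrow> real) \<Rightarrow> nat \<Rightarrow> nat \<Rightarrow> nat list \<Rightarrow> real" where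
  "input_entropy ch q n y =
     (let post = (\<lambda>x. ch x y / (\<Sum>x'\<in>words q n. ch x' y))
      in - (\<Sum>x\<in>words q n. if post x = 0 then 0 else post x * log 2 (post x)))"

definition H_in_del :: "nat \<Rightarrow> nat \<Rightarrow> nat list \<Rightarrow> real" where
  "H_in_del q n y = input_entropy (del_prob n) q n y"

definition H_in_ins :: "nat \<Rightarrow> nat \<Rightarrow> nat list \<Rightarrow> real" where
  "H_in_ins q n y = input_entropy (ins_prob n q) q n y"

text \<open>A run: maximal block [i,j) (0-based, half-open) of identical consecutive symbols.\<close>
definition is_run :: "nat list \<Rightarrow> nat \<Rightarrow> nat \<Rightarrow> bool" where
  "is_run xs i j \<longleftrightarrow> i < j \<and> j \<le> length xs \<and> (\<forall>k\<in>{i..<j}. xs ! k = xs ! i)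
     \<and> (0 < i \<longrightarrow> xs ! (i - 1) \<noteq> xs ! i) \<and> (j < length xs \<longrightarrow> xs ! j \<noteq> xs ! i)"

definition num_runs :: "nat \<Rightarrow> nat list \<Rightarrow> nat" where
  "num_runs r xs = card {(i, j). is_run xs i j \<and> j - i = r}"

definition N_runs :: "nat \<Rightarrow> nat \<Rightarrow> nat \<Rightarrow> nat" where
  "N_runs l r q = (\<Sum>xs\<in>words q l. num_runs r xs)"

end

(*
  If x arises from y by inserting one symbol, omega y x counts the positions of x whose deletion
  gives y. Deleting positions i <= j of x gives the same word iff x is constant on [i, j], so
  omega (x without position i) x is the length of the run of x containing i. The posterior of
  either channel is proportional to omega, and the total weight sum_x omega does not depend on
  the output y (n q for deletion, n + 1 for insertion), so each input entropy is
  log T - (sum_x omega log omega) / T. Summed over y and reindexed by deletion positions, the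
  omega log omega terms add up to r log r for every run of length r of the longer words. For the
  deletion channel, shortening a run of length r >= 2 by one symbol is a bijection onto the runs
  of length r - 1 of the shorter words, which yields the weights (r + 1) log (r + 1).
*)

theory Submission
  imports Defs
begin

definition remove_nth :: "nat \<Rightarrow> 'a list \<Rightarrow> 'a list" where
  "remove_nth i xs = take i xs @ drop (Suc i) xs"

definition insert_nth :: "nat \<Rightarrow> 'a \<Rightarrow> 'a list \<Rightarrow> 'a list" where
  "insert_nth i a xs = take i xs @ a # drop i xs"

lemma length_remove_nth [simp]: "i < length xs \<Longrightarrow> length (remove_nth i xs) = length xs - 1"
  by (simp add: remove_nth_def)

lemma length_insert_nth [simp]: "i \<le> length xs \<Longrightarrow> length (insert_nth i a xs) = Suc (length xs)"
  by (simp add: insert_nth_def)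

lemma nth_remove_nth:
  "i < length xs \<Longrightarrow> k < length xs - 1 \<Longrightarrow>
    remove_nth i xs ! k = (if k < i then xs ! k else xs ! Suc k)"
  by (auto simp: remove_nth_def nth_append min_def)

lemma nth_insert_nth:
  "i \<le> length xs \<Longrightarrow> k \<le> length xs \<Longrightarrow>
    insert_nth i a xs ! k = (if k < i then xs ! k else if k = i then a else xs ! (k - 1))"
  by (auto simp: insert_nth_def nth_append min_def nth_Cons')

lemma remove_nth_insert_nth [simp]: "i \<le> length xs \<Longrightarrow> remove_nth i (insert_nth i a xs) = xs"
  by (simp add: remove_nth_def insert_nth_def)

lemma insert_nth_remove_nth: "i < length xs \<Longrightarrow> insert_nth i (xs ! i) (remove_nth i xs) = xs"
  by (simp add: remove_nth_def insert_nth_def id_take_nth_drop[symmetric])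

lemma set_remove_nth: "set (remove_nth i xs) \<subseteq> set xs"
  by (auto simp: remove_nth_def dest: in_set_takeD in_set_dropD)

lemma set_insert_nth: "set (insert_nth i a xs) \<subseteq> insert a (set xs)"
  by (auto simp: insert_nth_def dest: in_set_takeD in_set_dropD)

lemma nths_Compl_singleton: "nths xs (- {i}) = remove_nth i xs"
proof (induction xs arbitrary: i)
  case (Cons x xs)
  show ?case
  proof (cases i)
    case (Suc j)
    have "{k. Suc k \<in> - {i}} = - {j}" using Suc by auto
    then show ?thesis using Cons Suc by (simp add: nths_Cons remove_nth_def)
  qed (simp add: nths_Cons remove_nth_def nths_all)
qed (simp add: remove_nth_def)

lemma nths_inter_lessThan_length: "nths xs (A \<inter> {..<length xs}) = nths xs A"
  unfolding nths_def by (rule arg_cong[where f = "map fst"], rule filter_cong) (auto simp: set_zip)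

lemma remove_nth_eq_iff_adjacent_eq:
  assumes "i \<le> j" "j < length xs"
  shows "remove_nth i xs = remove_nth j xs \<longleftrightarrow> (\<forall>k\<in>{i..<j}. xs ! Suc k = xs ! k)"
proof
  assume eq: "remove_nth i xs = remove_nth j xs"
  show "\<forall>k\<in>{i..<j}. xs ! Suc k = xs ! k"
  proof
    fix k assume "k \<in> {i..<j}"
    then have "remove_nth i xs ! k = xs ! Suc k" "remove_nth j xs ! k = xs ! k"
      using assms by (auto simp: nth_remove_nth)
    then show "xs ! Suc k = xs ! k" using eq by simp
  qed
next
  assume "\<forall>k\<in>{i..<j}. xs ! Suc k = xs ! k"
  then have "remove_nth i xs ! k = remove_nth j xs ! k" if "k < length xs - 1" for k
    using assms that by (auto simp: nth_remove_nth)
  then show "remove_nth i xs = remove_nth j xs"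
    using assms by (simp add: list_eq_iff_nth_eq)
qed

lemma adjacent_eq_iff_constant:
  "(\<forall>k\<in>{i..<j}. f (Suc k) = f k) \<longleftrightarrow> (\<forall>k\<in>{i..j}. f k = f i)"
proof (induction j)
  case 0
  have "{i..<0} = {}" "{i..0} \<subseteq> {i}" by auto
  then show ?case by blast
next
  case (Suc j)
  show ?case
  proof (cases "i \<le> j")
    case True
    then have "{i..<Suc j} = insert j {i..<j}" "{i..Suc j} = insert (Suc j) {i..j}" by auto
    moreover have "j \<in> {i..j}" using True by simp
    ultimately show ?thesis using Suc by (metis insert_iff)
  next
    case False
    then have "{i..<Suc j} = {}" "{i..Suc j} \<subseteq> {i}" by auto
    then show ?thesis by blast
  qed
qed

lemma remove_nth_eq_iff_constant:
  assumes "i \<le> j" "j < length xs"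
  shows "remove_nth i xs = remove_nth j xs \<longleftrightarrow> (\<forall>k\<in>{i..j}. xs ! k = xs ! i)"
  using adjacent_eq_iff_constant[of i j "(!) xs"] by (simp add: remove_nth_eq_iff_adjacent_eq[OF assms])

lemma nths_lessThan_Diff_singleton: "nths xs ({..<length xs} - {i}) = remove_nth i xs"
proof -
  have "{..<length xs} - {i} = - {i} \<inter> {..<length xs}" by auto
  then show ?thesis by (simp add: nths_inter_lessThan_length nths_Compl_singleton)
qed

lemma omega_eq_card_remove_nth:
  assumes len: "length v = Suc (length u)"
  shows "omega u v = card {i. i < length v \<and> remove_nth i v = u}"
proof -
  let ?L = "{..<length v}"
  have "{I. I \<subseteq> ?L \<and> card I = length u \<and> nths v I = u}
      = (\<lambda>i. ?L - {i}) ` {i. i < length v \<and> remove_nth i v = u}"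
  proof (intro set_eqI iffI)
    fix I assume "I \<in> {I. I \<subseteq> ?L \<and> card I = length u \<and> nths v I = u}"
    then have I: "I \<subseteq> ?L" "card I = length u" "nths v I = u" by auto
    then have "card (?L - I) = 1" using len by (simp add: card_Diff_subset finite_subset)
    then obtain i where "?L - I = {i}" by (rule card_1_singletonE)
    then have "I = ?L - {i}" "i < length v" using I(1) by auto
    moreover have "remove_nth i v = u" using I(3) by (simp add: calculation nths_lessThan_Diff_singleton)
    ultimately show "I \<in> (\<lambda>i. ?L - {i}) ` {i. i < length v \<and> remove_nth i v = u}" by blast
  next
    fix I assume "I \<in> (\<lambda>i. ?L - {i}) ` {i. i < length v \<and> remove_nth i v = u}"
    then obtain i where i: "i < length v" "remove_nth i v = u" "I = ?L - {i}" by blast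
    then have "nths v I = u" by (simp add: nths_lessThan_Diff_singleton)
    moreover have "card I = length u" using i len by simp
    ultimately show "I \<in> {I. I \<subseteq> ?L \<and> card I = length u \<and> nths v I = u}"
      using i by blast
  qed
  moreover have "inj_on (\<lambda>i. ?L - {i}) {i. i < length v \<and> remove_nth i v = u}"
    by (rule inj_onI) auto
  ultimately show ?thesis by (simp add: omega_def card_image)
qed

lemma is_runD:
  assumes "is_run xs s e"
  shows "s < e" "e \<le> length xs" "k \<in> {s..<e} \<Longrightarrow> xs ! k = xs ! s"
    "0 < s \<Longrightarrow> xs ! (s - 1) \<noteq> xs ! s" "e < length xs \<Longrightarrow> xs ! e \<noteq> xs ! s"
  using assms unfolding is_run_def by blast+

lemma run_start_exists:
  assumes "i < length xs"
  shows "\<exists>s\<le>i. (\<forall>k\<in>{s..i}. xs ! k = xs ! i) \<and> (0 < s \<longrightarrow> xs ! (s - 1) \<noteq> xs ! s)"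
  using assms
proof (induction i)
  case 0
  show ?case by (intro exI[of _ 0]) simp
next
  case (Suc i)
  show ?case
  proof (cases "xs ! i = xs ! Suc i")
    case True
    have "i < length xs" using Suc.prems by simp
    then obtain s where s: "s \<le> i" "\<forall>k\<in>{s..i}. xs ! k = xs ! i" "0 < s \<longrightarrow> xs ! (s - 1) \<noteq> xs ! s"
      using Suc.IH by blast
    have "\<forall>k\<in>{s..Suc i}. xs ! k = xs ! Suc i"
    proof
      fix k assume "k \<in> {s..Suc i}"
      then consider "k \<in> {s..i}" | "k = Suc i" by (auto simp: le_Suc_eq)
      then show "xs ! k = xs ! Suc i"
      proof cases
        case 1
        then have "xs ! k = xs ! i" using s(2) by blast
        then show ?thesis using True by simp
      qed simp
    qed
    with s(3) le_SucI[OF s(1)] show ?thesis by (intro exI[of _ s] conjI)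
  next
    case False
    then show ?thesis by (intro exI[of _ "Suc i"]) simp
  qed
qed

lemma run_end_exists:
  assumes "i < length xs"
  shows "\<exists>e>i. e \<le> length xs \<and> (\<forall>k\<in>{i..<e}. xs ! k = xs ! i) \<and> (e < length xs \<longrightarrow> xs ! e \<noteq> xs ! i)"
  using assms
proof (induction "length xs - i" arbitrary: i rule: less_induct)
  case less
  show ?case
  proof (cases "Suc i < length xs \<and> xs ! Suc i = xs ! i")
    case True
    then have "\<exists>e>Suc i. e \<le> length xs \<and> (\<forall>k\<in>{Suc i..<e}. xs ! k = xs ! Suc i)
        \<and> (e < length xs \<longrightarrow> xs ! e \<noteq> xs ! Suc i)"
      using less.hyps[of "Suc i"] True by (simp add: diff_less_mono2)
    then obtain e where e: "Suc i < e" "e \<le> length xs" "\<forall>k\<in>{Suc i..<e}. xs ! k = xs ! Suc i"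
        "e < length xs \<longrightarrow> xs ! e \<noteq> xs ! Suc i"
      by blast
    have "\<forall>k\<in>{i..<e}. xs ! k = xs ! i"
      using e(3) True by (metis atLeastLessThan_iff Suc_le_eq le_neq_implies_less)
    then show ?thesis using e True by (metis Suc_lessD)
  next
    case False
    have "{i..<Suc i} = {i}" by auto
    then show ?thesis using False less.prems by (intro exI[of _ "Suc i"]) (simp add: Suc_le_eq)
  qed
qed

lemma run_exists:
  assumes "i < length xs"
  obtains s e where "is_run xs s e" "s \<le> i" "i < e"
proof -
  \<comment> \<open>constancy against a fresh \<open>v\<close>, since \<open>xs ! k = xs ! i\<close> loops as a simp rule\<close>
  define v where "v = xs ! i"
  obtain s where s: "s \<le> i" "\<forall>k\<in>{s..i}. xs ! k = v" "0 < s \<longrightarrow> xs ! (s - 1) \<noteq> xs ! s"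
    using run_start_exists[OF assms] unfolding v_def by blast
  obtain e where e: "i < e" "e \<le> length xs" "\<forall>k\<in>{i..<e}. xs ! k = v" "e < length xs \<longrightarrow> xs ! e \<noteq> v"
    using run_end_exists[OF assms] unfolding v_def by blast
  have "\<forall>k\<in>{s..<e}. xs ! k = v"
    using s(2) e(3) by (metis atLeastAtMost_iff atLeastLessThan_iff linorder_le_less_linear less_imp_le)
  then have "is_run xs s e" using s e unfolding is_run_def by simp
  then show thesis using s(1) e(1) by (rule that)
qed

lemma positions_with_equal_removal:
  assumes run: "is_run xs s e" and i: "s \<le> i" "i < e"
  shows "{j. j < length xs \<and> remove_nth j xs = remove_nth i xs} = {s..<e}"
proof -
  note run = is_runD[OF run]
  have removal_iff: "remove_nth j xs = remove_nth s xs \<longleftrightarrow> j \<in> {s..<e}" if j: "j < length xs" for j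
  proof (cases "j < s")
    case True
    have "\<not> (\<forall>k\<in>{j..s}. xs ! k = xs ! j)"
    proof
      assume const: "\<forall>k\<in>{j..s}. xs ! k = xs ! j"
      have "xs ! (s - 1) = xs ! j" "xs ! s = xs ! j"
        using bspec[OF const, of "s - 1"] bspec[OF const, of s] True by simp_all
      then show False using run(4) True by simp
    qed
    then show ?thesis using True run(1,2) j by (simp add: remove_nth_eq_iff_constant)
  next
    case False
    have "(\<forall>k\<in>{s..j}. xs ! k = xs ! s) \<longleftrightarrow> j < e"
    proof
      assume const: "\<forall>k\<in>{s..j}. xs ! k = xs ! s"
      show "j < e"
      proof (rule ccontr)
        assume "\<not> j < e"
        then show False using bspec[OF const, of e] run(1,5) j by simp
      qed
    next
      assume "j < e"
      then show "\<forall>k\<in>{s..j}. xs ! k = xs ! s"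
        using run(3) by (meson atLeastAtMost_iff atLeastLessThan_iff le_less_trans)
    qed
    then have "remove_nth s xs = remove_nth j xs \<longleftrightarrow> j < e"
      using False j by (simp add: remove_nth_eq_iff_constant)
    then show ?thesis using False by (metis atLeastLessThan_iff not_less)
  qed
  have "remove_nth i xs = remove_nth s xs" using removal_iff i run(1,2) by simp
  then show ?thesis using removal_iff run(2) by auto
qed

definition runs :: "nat list \<Rightarrow> (nat \<times> nat) set" where
  "runs xs = {(s, e). is_run xs s e}"

lemma finite_runs [simp]: "finite (runs xs)"
proof (rule finite_subset)
  show "runs xs \<subseteq> {..length xs} \<times> {..length xs}"
    using is_runD(1,2) by (fastforce simp: runs_def)
qed auto

lemma omega_remove_nth_run:
  assumes "is_run xs s e" "s \<le> i" "i < e"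
  shows "omega (remove_nth i xs) xs = e - s"
proof -
  have "i < length xs" using is_runD(2)[OF assms(1)] assms(3) by simp
  then have "omega (remove_nth i xs) xs = card {j. j < length xs \<and> remove_nth j xs = remove_nth i xs}"
    by (intro omega_eq_card_remove_nth) simp
  then show ?thesis using positions_with_equal_removal[OF assms] by simp
qed

lemma run_unique:
  assumes "is_run xs s e" "s \<le> i" "i < e" "is_run xs s' e'" "s' \<le> i" "i < e'"
  shows "s' = s \<and> e' = e"
proof -
  have "{s'..<e'} = {s..<e}"
    using positions_with_equal_removal[OF assms(1-3)] positions_with_equal_removal[OF assms(4-6)] by simp
  moreover have "s < e" "s' < e'" using assms(2,3,5,6) by simp_all
  ultimately show ?thesis by (simp add: atLeastLessThan_eq_iff)
qed

lemma Union_runs: "(\<Union>(s, e)\<in>runs xs. {s..<e}) = {..<length xs}"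
proof (intro equalityI subsetI)
  fix i assume "i \<in> (\<Union>(s, e)\<in>runs xs. {s..<e})"
  then obtain s e where "is_run xs s e" "i < e" by (auto simp: runs_def)
  then show "i \<in> {..<length xs}" using is_runD(2) by fastforce
next
  fix i assume "i \<in> {..<length xs}"
  then obtain s e where "is_run xs s e" "s \<le> i" "i < e" using run_exists by blast
  then show "i \<in> (\<Union>(s, e)\<in>runs xs. {s..<e})" unfolding runs_def by force
qed

lemma sum_omega_remove_nth_runs:
  fixes g :: "nat \<Rightarrow> 'b::comm_semiring_1"
  shows "(\<Sum>i<length xs. g (omega (remove_nth i xs) xs)) = (\<Sum>(s, e)\<in>runs xs. of_nat (e - s) * g (e - s))"
proof -
  have disjoint: "\<forall>p\<in>runs xs. \<forall>p'\<in>runs xs. p \<noteq> p' \<longrightarrow>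
      (\<lambda>(s, e). {s..<e}) p \<inter> (\<lambda>(s, e). {s..<e}) p' = {}"
    by (fastforce simp: runs_def dest: run_unique)
  have "(\<Sum>i<length xs. g (omega (remove_nth i xs) xs))
      = (\<Sum>(s, e)\<in>runs xs. \<Sum>i\<in>{s..<e}. g (omega (remove_nth i xs) xs))"
    unfolding Union_runs[symmetric] using sum.UNION_disjoint[OF finite_runs _ disjoint]
    by (simp add: case_prod_beta)
  also have "\<dots> = (\<Sum>(s, e)\<in>runs xs. \<Sum>i\<in>{s..<e}. g (e - s))"
    by (intro sum.cong refl) (auto simp: runs_def omega_remove_nth_run)
  finally show ?thesis by (simp add: case_prod_beta)
qed

lemma sum_runs_by_length:
  fixes h :: "nat \<Rightarrow> 'b::comm_semiring_1"
  shows "(\<Sum>(s, e)\<in>runs xs. h (e - s)) = (\<Sum>r = 1..length xs. of_nat (num_runs r xs) * h r)"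
proof -
  let ?len = "\<lambda>p. snd p - fst p"
  have "?len ` runs xs \<subseteq> {1..length xs}"
    using is_runD(1,2) by (fastforce simp: runs_def)
  then have "(\<Sum>p\<in>runs xs. h (?len p)) = (\<Sum>r = 1..length xs. \<Sum>p\<in>{p. p \<in> runs xs \<and> ?len p = r}. h (?len p))"
    by (rule sum.group[OF finite_runs finite_atLeastAtMost, symmetric])
  also have "\<dots> = (\<Sum>r = 1..length xs. of_nat (card {p. p \<in> runs xs \<and> ?len p = r}) * h r)"
    by simp
  also have "\<dots> = (\<Sum>r = 1..length xs. of_nat (num_runs r xs) * h r)"
  proof -
    have "{p. p \<in> runs xs \<and> ?len p = r} = {(s, e). is_run xs s e \<and> e - s = r}" for r
      by (auto simp: runs_def)
    then show ?thesis by (simp add: num_runs_def)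
  qed
  finally show ?thesis by (simp add: case_prod_beta)
qed

lemma finite_words [simp]: "finite (words q n)"
  using finite_lists_length_eq[of "{..<q}" n] by (simp add: words_def conj_commute)

lemma card_words: "card (words q n) = q ^ n"
  using card_lists_length_eq[of "{..<q}" n] by (simp add: words_def conj_commute)

lemma nth_less_of_words: "xs \<in> words q n \<Longrightarrow> i < n \<Longrightarrow> xs ! i < q"
  by (auto simp: words_def dest: nth_mem)

lemma remove_nth_in_words: "x \<in> words q (Suc m) \<Longrightarrow> i < Suc m \<Longrightarrow> remove_nth i x \<in> words q m"
  using set_remove_nth[of i x] by (auto simp: words_def)

lemma insert_nth_in_words: "y \<in> words q m \<Longrightarrow> i \<le> m \<Longrightarrow> a < q \<Longrightarrow> insert_nth i a y \<in> words q (Suc m)"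
  using set_insert_nth[of i a y] by (auto simp: words_def)

lemma sum_words_runs_by_length:
  fixes h :: "nat \<Rightarrow> 'b::comm_semiring_1"
  shows "(\<Sum>xs\<in>words q l. \<Sum>(s, e)\<in>runs xs. h (e - s)) = (\<Sum>r = 1..l. of_nat (N_runs l r q) * h r)"
proof -
  have "(\<Sum>xs\<in>words q l. \<Sum>(s, e)\<in>runs xs. h (e - s))
      = (\<Sum>xs\<in>words q l. \<Sum>r = 1..l. of_nat (num_runs r xs) * h r)"
    by (intro sum.cong refl) (simp add: sum_runs_by_length words_def)
  also have "\<dots> = (\<Sum>r = 1..l. of_nat (N_runs l r q) * h r)"
    by (subst sum.swap) (simp add: N_runs_def sum_distrib_right)
  finally show ?thesis .
qed

lemma is_run_remove_nth:
  assumes run: "is_run xs s e" and long: "Suc s < e"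
  shows "is_run (remove_nth s xs) s (e - 1)"
proof -
  define v where "v = xs ! s"
  note run = is_runD[OF run, folded v_def]
  have "remove_nth s xs ! s = v" using run(2) run(3)[of "Suc s"] long by (simp add: nth_remove_nth)
  then show ?thesis using long run(2-5) unfolding is_run_def by (auto simp: nth_remove_nth)
qed

lemma is_run_insert_nth:
  assumes run: "is_run xs s e"
  shows "is_run (insert_nth s (xs ! s) xs) s (Suc e)"
proof -
  define v where "v = xs ! s"
  note run = is_runD[OF run, folded v_def]
  have "xs ! (k - 1) = v" if "s < k" "k \<le> e" for k
    using run(3)[of "k - 1"] that by fastforce
  then show ?thesis using run unfolding is_run_def v_def[symmetric] by (auto simp: nth_insert_nth)
qed

lemma sum_runs_words_Suc:
  fixes \<phi> :: "nat \<Rightarrow> 'b::comm_monoid_add"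
  assumes "\<phi> 1 = 0"
  shows "(\<Sum>x\<in>words q (Suc m). \<Sum>(s, e)\<in>runs x. \<phi> (e - s))
       = (\<Sum>y\<in>words q m. \<Sum>(s, e)\<in>runs y. \<phi> (Suc (e - s)))"
proof -
  let ?S = "Sigma (words q (Suc m)) runs"
  let ?A = "{(x, s, e) \<in> ?S. Suc s < e}"
  let ?B = "Sigma (words q m) runs"
  define shrink where "shrink = (\<lambda>(x :: nat list, s, e :: nat). (remove_nth s x, s, e - 1))"
  define grow where "grow = (\<lambda>(y :: nat list, s, e). (insert_nth s (y ! s) y, s, Suc e))"
  have shrink: "grow (shrink a) = a \<and> shrink a \<in> ?B" if in_A: "a \<in> ?A" for a
  proof -
    obtain x s e where a: "a = (x, s, e)" "x \<in> words q (Suc m)" "is_run x s e" "Suc s < e"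
      using in_A by (auto simp: runs_def)
    have "e \<le> length x" "length x = Suc m" using is_runD(2)[OF a(3)] a(2) by (auto simp: words_def)
    moreover have "remove_nth s x ! s = x ! s"
      using calculation is_runD(3)[OF a(3), of "Suc s"] a(4) by (simp add: nth_remove_nth)
    ultimately show ?thesis
      using a insert_nth_remove_nth[of s x] remove_nth_in_words[OF a(2)] is_run_remove_nth[OF a(3,4)]
      by (auto simp: shrink_def grow_def runs_def)
  qed
  have grow: "shrink (grow b) = b \<and> grow b \<in> ?A" if in_B: "b \<in> ?B" for b
  proof -
    obtain y s e where b: "b = (y, s, e)" "y \<in> words q m" "is_run y s e"
      using in_B by (auto simp: runs_def)
    have "s < length y" "length y = m" using is_runD(1,2)[OF b(3)] b(2) by (auto simp: words_def)
    moreover have "y ! s < q" using b(2) calculation nth_less_of_words by simp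
    ultimately show ?thesis
      using b insert_nth_in_words[OF b(2)] is_run_insert_nth[OF b(3)] is_runD(1)[OF b(3)]
      by (auto simp: shrink_def grow_def runs_def)
  qed
  have "(\<Sum>x\<in>words q (Suc m). \<Sum>(s, e)\<in>runs x. \<phi> (e - s)) = (\<Sum>(x, s, e)\<in>?S. \<phi> (e - s))"
    by (simp add: sum.Sigma)
  also have "\<dots> = (\<Sum>(x, s, e)\<in>?A. \<phi> (e - s))"
  proof (rule sum.mono_neutral_right)
    show "\<forall>z\<in>?S - ?A. (case z of (x, s, e) \<Rightarrow> \<phi> (e - s)) = 0"
    proof
      fix z assume "z \<in> ?S - ?A"
      then obtain x s e where z: "z = (x, s, e)" "is_run x s e" "\<not> Suc s < e"
        by (cases z) (auto simp: runs_def)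
      then have "e - s = 1" using is_runD(1) by fastforce
      then show "(case z of (x, s, e) \<Rightarrow> \<phi> (e - s)) = 0" using assms z(1) by simp
    qed
  qed (auto intro: finite_SigmaI)
  also have "\<dots> = (\<Sum>(y, s, e)\<in>?B. \<phi> (Suc (e - s)))"
    by (rule sum.reindex_bij_witness[where i = grow and j = shrink]) (use shrink grow in \<open>auto simp: shrink_def Suc_diff_Suc\<close>)
  also have "\<dots> = (\<Sum>y\<in>words q m. \<Sum>(s, e)\<in>runs y. \<phi> (Suc (e - s)))"
    by (simp add: sum.Sigma)
  finally show ?thesis .
qed

lemma sum_omega_remove_nth:
  fixes f :: "nat list \<Rightarrow> 'b::comm_semiring_1"
  assumes x: "x \<in> words q (Suc m)"
  shows "(\<Sum>y\<in>words q m. of_nat (omega y x) * f y) = (\<Sum>i<Suc m. f (remove_nth i x))"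
proof -
  have "of_nat (omega y x) * f y = (\<Sum>i<Suc m. if remove_nth i x = y then f y else 0)"
    if "y \<in> words q m" for y
  proof -
    have "omega y x = card {i \<in> {..<Suc m}. remove_nth i x = y}"
      using x that by (simp add: omega_eq_card_remove_nth words_def)
    then show ?thesis by (simp add: sum.inter_filter[symmetric] del: sum.lessThan_Suc)
  qed
  then have "(\<Sum>y\<in>words q m. of_nat (omega y x) * f y)
      = (\<Sum>y\<in>words q m. \<Sum>i<Suc m. if remove_nth i x = y then f y else 0)"
    by (rule sum.cong[OF refl])
  also have "\<dots> = (\<Sum>i<Suc m. \<Sum>y\<in>words q m. if remove_nth i x = y then f y else 0)"
    by (rule sum.swap)
  also have "\<dots> = (\<Sum>i<Suc m. f (remove_nth i x))"
    using remove_nth_in_words[OF x] by simp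
  finally show ?thesis .
qed

lemma card_remove_nth_preimage:
  assumes y: "y \<in> words q m" and i: "i \<le> m"
  shows "card {x \<in> words q (Suc m). remove_nth i x = y} = q"
proof -
  let ?X = "{x \<in> words q (Suc m). remove_nth i x = y}"
  have len: "length y = m" using y by (simp add: words_def)
  have "bij_betw (\<lambda>a. insert_nth i a y) {..<q} ?X"
  proof (rule bij_betw_byWitness[where f' = "\<lambda>x. x ! i"])
    show "\<forall>a\<in>{..<q}. insert_nth i a y ! i = a" using i len by (simp add: nth_insert_nth)
    show "(\<lambda>a. insert_nth i a y) ` {..<q} \<subseteq> ?X" using i len insert_nth_in_words[OF y i] by auto
    show "\<forall>x\<in>?X. insert_nth i (x ! i) y = x"
    proof
      fix x assume "x \<in> ?X"
      then have "i < length x" "remove_nth i x = y" using i by (auto simp: words_def)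
      then show "insert_nth i (x ! i) y = x" using insert_nth_remove_nth[of i x] by simp
    qed
    show "(\<lambda>x. x ! i) ` ?X \<subseteq> {..<q}"
    proof
      fix a assume "a \<in> (\<lambda>x. x ! i) ` ?X"
      then obtain x where "x \<in> words q (Suc m)" "a = x ! i" by blast
      then show "a \<in> {..<q}" using i nth_less_of_words by simp
    qed
  qed
  then show ?thesis by (simp add: bij_betw_same_card[symmetric])
qed

lemma sum_omega_supersequences:
  assumes y: "y \<in> words q m"
  shows "(\<Sum>x\<in>words q (Suc m). omega y x) = Suc m * q"
proof -
  have "(\<Sum>x\<in>words q (Suc m). omega y x) = (\<Sum>x\<in>words q (Suc m). card {i \<in> {..<Suc m}. remove_nth i x = y})"
    using y by (intro sum.cong refl) (simp add: omega_eq_card_remove_nth words_def)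
  also have "\<dots> = q * Suc m"
    using sum_multicount[of "words q (Suc m)" "{..<Suc m}" "\<lambda>x i. remove_nth i x = y" q]
      card_remove_nth_preimage[OF y] by simp
  finally show ?thesis by simp
qed

lemma input_entropy_proportional:
  fixes w :: "nat list \<Rightarrow> real"
  assumes ch: "\<And>x. x \<in> words q n \<Longrightarrow> ch x y = w x / D" and "D > 0"
    and nonneg: "\<And>x. x \<in> words q n \<Longrightarrow> w x \<ge> 0"
    and total: "(\<Sum>x\<in>words q n. w x) = T" and "T > 0"
  shows "input_entropy ch q n y = log 2 T - (\<Sum>x\<in>words q n. w x * log 2 (w x)) / T"
proof -
  have "(\<Sum>x\<in>words q n. ch x y) = T / D"
    using ch total by (simp add: sum_divide_distrib[symmetric])
  then have posterior: "ch x y / (\<Sum>x'\<in>words q n. ch x' y) = w x / T" if "x \<in> words q n" for x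
    using ch[OF that] \<open>D > 0\<close> \<open>T > 0\<close> by simp
  have summand: "(if w x / T = 0 then 0 else w x / T * log 2 (w x / T))
      = w x * log 2 (w x) / T - w x * log 2 T / T" if "x \<in> words q n" for x
  proof (cases "w x = 0")
    case False
    then have "log 2 (w x / T) = log 2 (w x) - log 2 T"
      using nonneg[OF that] \<open>T > 0\<close> by (simp add: log_divide)
    then show ?thesis using False \<open>T > 0\<close> by (simp add: diff_divide_distrib right_diff_distrib)
  qed simp
  have "input_entropy ch q n y = - (\<Sum>x\<in>words q n. if w x / T = 0 then 0 else w x / T * log 2 (w x / T))"
    unfolding input_entropy_def Let_def by (intro arg_cong[where f = uminus] sum.cong refl) (simp only: posterior)
  also have "\<dots> = - (\<Sum>x\<in>words q n. w x * log 2 (w x) / T - w x * log 2 T / T)"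
    by (intro arg_cong[where f = uminus] sum.cong refl summand)
  also have "\<dots> = log 2 T * ((\<Sum>x\<in>words q n. w x) / T) - (\<Sum>x\<in>words q n. w x * log 2 (w x)) / T"
    by (simp add: sum_subtractf sum_divide_distrib[symmetric] sum_distrib_right mult.commute)
  finally show ?thesis using total \<open>T > 0\<close> by simp
qed

lemma sum_omega_log_omega:
  assumes x: "x \<in> words q (Suc m)"
  shows "(\<Sum>y\<in>words q m. real (omega y x) * log 2 (real (omega y x)))
       = (\<Sum>(s, e)\<in>runs x. real (e - s) * log 2 (real (e - s)))"
proof -
  have "length x = Suc m" using x by (simp add: words_def)
  then show ?thesis
    using sum_omega_remove_nth[OF x, of "\<lambda>y. log 2 (real (omega y x))"]
      sum_omega_remove_nth_runs[of "\<lambda>k. log 2 (real k)" x]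
    by simp
qed

lemma mean_H_in_del:
  assumes "0 < q"
  shows "(\<Sum>y\<in>words q m. H_in_del q (Suc m) y) / real q ^ m
       = log 2 (real (Suc m) * real q)
         - (\<Sum>r = 1..m. real (N_runs m r q) * (real r + 1) * log 2 (real r + 1)) / (real (Suc m) * real q ^ Suc m)"
proof -
  define T where "T = real (Suc m) * real q"
  define K where "K = (\<Sum>y\<in>words q m. \<Sum>x\<in>words q (Suc m). real (omega y x) * log 2 (real (omega y x)))"
  have "T > 0" using assms by (simp add: T_def)
  have H: "H_in_del q (Suc m) y = log 2 T - (\<Sum>x\<in>words q (Suc m). real (omega y x) * log 2 (real (omega y x))) / T"
    if "y \<in> words q m" for y
    unfolding H_in_del_def
  proof (rule input_entropy_proportional[where D = "real (Suc m)"])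
    show "(\<Sum>x\<in>words q (Suc m). real (omega y x)) = T"
      using sum_omega_supersequences[OF that] by (simp add: T_def distrib_right flip: of_nat_sum)
  qed (use \<open>T > 0\<close> in \<open>simp_all add: del_prob_def\<close>)
  have "K = (\<Sum>x\<in>words q (Suc m). \<Sum>y\<in>words q m. real (omega y x) * log 2 (real (omega y x)))"
    unfolding K_def by (rule sum.swap)
  also have "\<dots> = (\<Sum>x\<in>words q (Suc m). \<Sum>(s, e)\<in>runs x. real (e - s) * log 2 (real (e - s)))"
    by (intro sum.cong refl sum_omega_log_omega)
  also have "\<dots> = (\<Sum>y\<in>words q m. \<Sum>(s, e)\<in>runs y. real (Suc (e - s)) * log 2 (real (Suc (e - s))))"
    by (rule sum_runs_words_Suc) simp
  also have "\<dots> = (\<Sum>r = 1..m. real (N_runs m r q) * (real (Suc r) * log 2 (real (Suc r))))"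
    by (rule sum_words_runs_by_length)
  finally have K: "K = (\<Sum>r = 1..m. real (N_runs m r q) * (real r + 1) * log 2 (real r + 1))"
    by (simp add: mult.assoc add.commute)
  have "(\<Sum>y\<in>words q m. H_in_del q (Suc m) y) = real q ^ m * log 2 T - K / T"
    using H by (simp add: sum_subtractf sum_divide_distrib[symmetric] card_words K_def)
  then have "(\<Sum>y\<in>words q m. H_in_del q (Suc m) y) / real q ^ m = log 2 T - K / (T * real q ^ m)"
    using assms \<open>T > 0\<close> by (simp add: field_simps)
  then show ?thesis by (simp add: K T_def mult.assoc)
qed

lemma mean_H_in_ins:
  assumes "0 < q"
  shows "(\<Sum>y\<in>words q (Suc n). H_in_ins q n y) / real q ^ Suc n
       = log 2 (real (Suc n))
         - (\<Sum>r = 1..Suc n. real (N_runs (Suc n) r q) * real r * log 2 (real r)) / (real (Suc n) * real q ^ Suc n)"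
proof -
  define T where "T = real (Suc n)"
  define K where "K = (\<Sum>y\<in>words q (Suc n). \<Sum>x\<in>words q n. real (omega x y) * log 2 (real (omega x y)))"
  have "T > 0" by (simp add: T_def)
  have H: "H_in_ins q n y = log 2 T - (\<Sum>x\<in>words q n. real (omega x y) * log 2 (real (omega x y))) / T"
    if "y \<in> words q (Suc n)" for y
    unfolding H_in_ins_def
  proof (rule input_entropy_proportional[where D = "real (n + 1) * real q"])
    show "(\<Sum>x\<in>words q n. real (omega x y)) = T"
      using sum_omega_remove_nth[OF that, of "\<lambda>_. 1"] by (simp add: T_def)
  qed (use assms \<open>T > 0\<close> in \<open>simp_all add: ins_prob_def\<close>)
  have "K = (\<Sum>y\<in>words q (Suc n). \<Sum>(s, e)\<in>runs y. real (e - s) * log 2 (real (e - s)))"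
    unfolding K_def by (intro sum.cong refl sum_omega_log_omega)
  also have "\<dots> = (\<Sum>r = 1..Suc n. real (N_runs (Suc n) r q) * (real r * log 2 (real r)))"
    by (rule sum_words_runs_by_length)
  finally have K: "K = (\<Sum>r = 1..Suc n. real (N_runs (Suc n) r q) * real r * log 2 (real r))"
    by (simp add: mult.assoc)
  have "(\<Sum>y\<in>words q (Suc n). H_in_ins q n y) = real q ^ Suc n * log 2 T - K / T"
    using H by (simp add: sum_subtractf sum_divide_distrib[symmetric] card_words K_def del: power_Suc)
  then have "(\<Sum>y\<in>words q (Suc n). H_in_ins q n y) / real q ^ Suc n = log 2 T - K / (T * real q ^ Suc n)"
    using assms \<open>T > 0\<close> by (simp add: field_simps del: power_Suc)
  then show ?thesis by (simp add: K T_def del: power_Suc)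
qed

theorem lemma12:
  fixes n q :: nat
  assumes "n \<ge> 1" and "q \<ge> 2"
  shows "((\<Sum>y\<in>words q (n - 1). H_in_del q n y) / real q ^ (n - 1)
           = log 2 (real n * real q)
             - (\<Sum>r = 1..n - 1. real (N_runs (n - 1) r q) * (real r + 1) * log 2 (real r + 1))
               / (real n * real q ^ n))
    \<and> ((\<Sum>y\<in>words q (n + 1). H_in_ins q n y) / real q ^ (n + 1)
           = log 2 (real n + 1)
             - (\<Sum>r = 1..n + 1. real (N_runs (n + 1) r q) * real r * log 2 (real r))
               / ((real n + 1) * real q ^ (n + 1)))"
proof -
  obtain m where n: "n = Suc m" using assms(1) by (cases n) auto
  have q: "0 < q" using assms(2) by simp
  show ?thesis
    using mean_H_in_del[OF q, of m] mean_H_in_ins[OF q, of n]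
    unfolding n by (simp add: add.commute del: power_Suc)
qed

end
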